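(* Let $\nabla$ be an affine connection, $h$ a non-degenerate symmetric $(0,2)$-tensor field and $J$ an $h$-symmetric $(1,1)$-tensor field on a smooth manifold $M$, and let $\hat J$ be the endomorphism of $TM\oplus T^*M$ given by $\hat J(X+\eta)=-X+2J(h^{-1}(\eta))+\eta$. Then the following are equivalent: (i) $\hat\nabla\hat J=0$; (ii) $\nabla J=0$; (iii) $\hat\nabla^*\hat J=0$.
   Context: $h$ is viewed as the isomorphism $TM\to T^*M$, $X\mapsto h(X,\cdot)$, with inverse $h^{-1}$; $J$ is $h$-symmetric if $h(JX,Y)=h(X,JY)$. The generalized connections are $\hat\nabla_{X+\eta}(Y+\beta):=\nabla_XY+h(\nabla_X(h^{-1}(\beta)))$ and $\hat\nabla^*_{X+\eta}(Y+\beta):=h^{-1}(\nabla_X(h(Y)))+\nabla_X\beta$ (the dual of $\hat\nabla$ w.r.t. $\check h(X+\eta,Y+\beta)=h(X,Y)+h(h^{-1}\eta,h^{-1}\beta)$), for vector fields $X,Y$ and 1-forms $\eta,\beta$; $(D_\sigma\hat J)\tau:=D_\sigma(\hat J\tau)-\hat J D_\sigma\tau$. *)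

theory Defs
  imports Main "HOL-Analysis.Analysis"
begin

text \<open>Algebraic (Koszul-style) model of the tensor calculus on a smooth manifold M.
  'r plays the role of the ring C-infinity(M) of smooth real functions (a commutative
  real algebra), 'v the C-infinity(M)-module of vector fields with scalar multiplication sm,
  and act X f the derivative X(f) of a function along a vector field.
  1-forms are the C-infinity(M)-linear maps from vector fields to functions.\<close>

definition vf_structure :: "('r::{comm_ring_1,real_algebra_1} \<Rightarrow> 'v::ab_group_add \<Rightarrow> 'v)
     \<Rightarrow> ('v \<Rightarrow> 'r \<Rightarrow> 'r) \<Rightarrow> bool" where
  "vf_structure sm act \<longleftrightarrow>
     module sm \<and>
     (\<forall>X f g. act X (f * g) = act X f * g + f * act X g) \<and>
     (\<forall>X f g. act X (f + g) = act X f + act X g) \<and>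
     (\<forall>X c. act X (of_real c) = 0) \<and>
     (\<forall>X Y f. act (X + Y) f = act X f + act Y f) \<and>
     (\<forall>g X f. act (sm g X) f = g * act X f)"

definition one_forms :: "('r::comm_ring_1 \<Rightarrow> 'v::ab_group_add \<Rightarrow> 'v) \<Rightarrow> ('v \<Rightarrow> 'r) set" where
  "one_forms sm = {\<eta>. (\<forall>X Y. \<eta> (X + Y) = \<eta> X + \<eta> Y) \<and> (\<forall>f X. \<eta> (sm f X) = f * \<eta> X)}"

definition tensor11 :: "('r::comm_ring_1 \<Rightarrow> 'v::ab_group_add \<Rightarrow> 'v) \<Rightarrow> ('v \<Rightarrow> 'v) \<Rightarrow> bool" where
  "tensor11 sm J \<longleftrightarrow> (\<forall>X Y. J (X + Y) = J X + J Y) \<and> (\<forall>f X. J (sm f X) = sm f (J X))"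

definition affine_connection :: "('r::comm_ring_1 \<Rightarrow> 'v::ab_group_add \<Rightarrow> 'v)
     \<Rightarrow> ('v \<Rightarrow> 'r \<Rightarrow> 'r) \<Rightarrow> ('v \<Rightarrow> 'v \<Rightarrow> 'v) \<Rightarrow> bool" where
  "affine_connection sm act nabla \<longleftrightarrow>
     (\<forall>X1 X2 Y. nabla (X1 + X2) Y = nabla X1 Y + nabla X2 Y) \<and>
     (\<forall>f X Y. nabla (sm f X) Y = sm f (nabla X Y)) \<and>
     (\<forall>X Y1 Y2. nabla X (Y1 + Y2) = nabla X Y1 + nabla X Y2) \<and>
     (\<forall>X f Y. nabla X (sm f Y) = sm (act X f) Y + sm f (nabla X Y))"

definition nabla_form :: "('v \<Rightarrow> 'r::comm_ring_1 \<Rightarrow> 'r) \<Rightarrow> ('v \<Rightarrow> 'v \<Rightarrow> 'v) \<Rightarrow> 'v \<Rightarrow> ('v \<Rightarrow> 'r) \<Rightarrow> ('v \<Rightarrow> 'r)" where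
  "nabla_form act nabla X \<eta> = (\<lambda>Y. act X (\<eta> Y) - \<eta> (nabla X Y))"

definition flat :: "('v \<Rightarrow> 'v \<Rightarrow> 'r) \<Rightarrow> 'v \<Rightarrow> ('v \<Rightarrow> 'r)" where
  "flat h X = (\<lambda>Y. h X Y)"

definition sharp :: "('v \<Rightarrow> 'v \<Rightarrow> 'r) \<Rightarrow> ('v \<Rightarrow> 'r) \<Rightarrow> 'v" where
  "sharp h = inv (flat h)"

definition nondeg_sym_tensor :: "('r::comm_ring_1 \<Rightarrow> 'v::ab_group_add \<Rightarrow> 'v) \<Rightarrow> ('v \<Rightarrow> 'v \<Rightarrow> 'r) \<Rightarrow> bool" where
  "nondeg_sym_tensor sm h \<longleftrightarrow>
     (\<forall>X. h X \<in> one_forms sm) \<and>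
     (\<forall>X Y. h X Y = h Y X) \<and>
     bij_betw (flat h) UNIV (one_forms sm)"

definition h_symmetric :: "('v \<Rightarrow> 'v \<Rightarrow> 'r) \<Rightarrow> ('v \<Rightarrow> 'v) \<Rightarrow> bool" where
  "h_symmetric h J \<longleftrightarrow> (\<forall>X Y. h (J X) Y = h X (J Y))"

text \<open>Sections of TM + T*M are pairs (X, eta) standing for X + eta.\<close>
definition gen_sections :: "('r::comm_ring_1 \<Rightarrow> 'v::ab_group_add \<Rightarrow> 'v) \<Rightarrow> ('v \<times> ('v \<Rightarrow> 'r)) set" where
  "gen_sections sm = UNIV \<times> one_forms sm"

definition Jhat :: "('r::comm_ring_1 \<Rightarrow> 'v::ab_group_add \<Rightarrow> 'v) \<Rightarrow> ('v \<Rightarrow> 'v \<Rightarrow> 'r) \<Rightarrow> ('v \<Rightarrow> 'v)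
     \<Rightarrow> 'v \<times> ('v \<Rightarrow> 'r) \<Rightarrow> 'v \<times> ('v \<Rightarrow> 'r)" where
  "Jhat sm h J \<sigma> = (- fst \<sigma> + sm 2 (J (sharp h (snd \<sigma>))), snd \<sigma>)"

definition nabla_hat :: "('v \<Rightarrow> 'v \<Rightarrow> 'r) \<Rightarrow> ('v \<Rightarrow> 'v \<Rightarrow> 'v)
     \<Rightarrow> 'v \<times> ('v \<Rightarrow> 'r) \<Rightarrow> 'v \<times> ('v \<Rightarrow> 'r) \<Rightarrow> 'v \<times> ('v \<Rightarrow> 'r)" where
  "nabla_hat h nabla \<sigma> \<tau> =
     (nabla (fst \<sigma>) (fst \<tau>), flat h (nabla (fst \<sigma>) (sharp h (snd \<tau>))))"

definition nabla_hat_star :: "('v \<Rightarrow> 'r::comm_ring_1 \<Rightarrow> 'r) \<Rightarrow> ('v \<Rightarrow> 'v \<Rightarrow> 'r) \<Rightarrow> ('v \<Rightarrow> 'v \<Rightarrow> 'v)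
     \<Rightarrow> 'v \<times> ('v \<Rightarrow> 'r) \<Rightarrow> 'v \<times> ('v \<Rightarrow> 'r) \<Rightarrow> 'v \<times> ('v \<Rightarrow> 'r)" where
  "nabla_hat_star act h nabla \<sigma> \<tau> =
     (sharp h (nabla_form act nabla (fst \<sigma>) (flat h (fst \<tau>))),
      nabla_form act nabla (fst \<sigma>) (snd \<tau>))"

definition gen_parallel :: "('r::comm_ring_1 \<Rightarrow> 'v::ab_group_add \<Rightarrow> 'v)
     \<Rightarrow> ('v \<times> ('v \<Rightarrow> 'r) \<Rightarrow> 'v \<times> ('v \<Rightarrow> 'r) \<Rightarrow> 'v \<times> ('v \<Rightarrow> 'r))
     \<Rightarrow> ('v \<times> ('v \<Rightarrow> 'r) \<Rightarrow> 'v \<times> ('v \<Rightarrow> 'r)) \<Rightarrow> bool" where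
  "gen_parallel sm D A \<longleftrightarrow>
     (\<forall>\<sigma>\<in>gen_sections sm. \<forall>\<tau>\<in>gen_sections sm. D \<sigma> (A \<tau>) = A (D \<sigma> \<tau>))"

definition parallel11 :: "('v::ab_group_add \<Rightarrow> 'v \<Rightarrow> 'v) \<Rightarrow> ('v \<Rightarrow> 'v) \<Rightarrow> bool" where
  "parallel11 nabla J \<longleftrightarrow> (\<forall>X Y. nabla X (J Y) = J (nabla X Y))"

end

theory Submission
  imports Defs
begin

text \<open>On the cotangent component both sides of \<open>\<hat>\<nabla>\<^sub>\<sigma>(\<hat>J\<tau>) = \<hat>J(\<hat>\<nabla>\<^sub>\<sigma>\<tau>)\<close> agree,
  and on the tangent component they differ by \<open>2(\<nabla>\<^sub>XJ)(h\<^sup>-\<^sup>1\<beta>)\<close>; since \<open>h\<^sup>-\<^sup>1\<close> is onto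
  and 2 is invertible, \<open>\<hat>\<nabla>\<hat>J = 0\<close> iff \<open>\<nabla>J = 0\<close>. This argument only uses additivity of
  the connection, and \<open>\<hat>\<nabla>\<^sup>*\<close> is precisely \<open>\<hat>\<nabla>\<close> built from the dual connection
  \<open>\<nabla>\<^sup>*\<^sub>XY = h\<^sup>-\<^sup>1(\<nabla>\<^sub>X(hY))\<close>, characterised by \<open>h(\<nabla>\<^sup>*\<^sub>XY, Z) = X h(Y,Z) - h(Y, \<nabla>\<^sub>XZ)\<close>.
  For \<open>h\<close>-symmetric \<open>J\<close> this gives \<open>h((\<nabla>\<^sup>*\<^sub>XJ)W, Z) = h(W, (\<nabla>\<^sub>XJ)Z)\<close>, so by
  non-degeneracy \<open>\<nabla>\<^sup>*J = 0\<close> iff \<open>\<nabla>J = 0\<close>.\<close>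

lemma (in module) scale_two: "scale 2 x = x + x"
  by (metis one_add_one scale_left_distrib scale_one)

lemma module_scale_two_cancel:
  fixes sm :: "'r::{comm_ring_1,real_algebra_1} \<Rightarrow> 'v::ab_group_add \<Rightarrow> 'v"
  assumes "module sm" and "sm 2 x = sm 2 y"
  shows "x = y"
proof -
  interpret module sm by (fact assms(1))
  have half: "of_real (1/2) * (2::'r) = 1"
    by (metis of_real_mult of_real_numeral of_real_1 field_sum_of_halves mult_2_right)
  have "x = sm (of_real (1/2)) (sm 2 x)" by (simp add: half)
  also have "\<dots> = y" by (simp add: assms(2) half)
  finally show ?thesis .
qed

locale nondegenerate_metric = module sm
  for sm :: "'r::{comm_ring_1,real_algebra_1} \<Rightarrow> 'v::ab_group_add \<Rightarrow> 'v" +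
  fixes h :: "'v \<Rightarrow> 'v \<Rightarrow> 'r"
  assumes nondeg_sym: "nondeg_sym_tensor sm h"
begin

lemma h_one_form: "h X \<in> one_forms sm"
  using nondeg_sym unfolding nondeg_sym_tensor_def by blast

lemma h_sym: "h X Y = h Y X"
  using nondeg_sym unfolding nondeg_sym_tensor_def by blast

lemma additive_h_right: "Modules.additive (h X)"
  by (rule Modules.additive.intro) (use h_one_form[of X] in \<open>simp add: one_forms_def\<close>)

lemma additive_h_left: "Modules.additive (\<lambda>Y. h Y Z)"
proof -
  have "(\<lambda>Y. h Y Z) = h Z" by (rule ext) (rule h_sym)
  then show ?thesis by (simp add: additive_h_right)
qed

lemma flat_one_form: "flat h X \<in> one_forms sm"
  using h_one_form[of X] unfolding flat_def by simp

lemma flat_bij: "bij_betw (flat h) UNIV (one_forms sm)"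
  using nondeg_sym unfolding nondeg_sym_tensor_def by blast

lemma sharp_flat [simp]: "sharp h (flat h X) = X"
  using flat_bij unfolding sharp_def bij_betw_def by (simp add: inv_f_f)

lemma flat_sharp: "\<eta> \<in> one_forms sm \<Longrightarrow> flat h (sharp h \<eta>) = \<eta>"
  using flat_bij unfolding sharp_def bij_betw_def by (metis f_inv_into_f)

lemma h_sharp: "\<eta> \<in> one_forms sm \<Longrightarrow> h (sharp h \<eta>) Z = \<eta> Z"
  using flat_sharp unfolding flat_def by metis

lemma h_eqI: "(\<And>Z. h X Z = h Y Z) \<Longrightarrow> X = Y"
  by (metis ext flat_def sharp_flat)

lemma nabla_hat_Jhat_commute_iff:
  assumes "Modules.additive (D X)"
  shows "nabla_hat h D (X, \<alpha>) (Jhat sm h J (Y, \<beta>)) = Jhat sm h J (nabla_hat h D (X, \<alpha>) (Y, \<beta>))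
     \<longleftrightarrow> D X (J (sharp h \<beta>)) = J (D X (sharp h \<beta>))"
proof -
  interpret DX: additive "D X" by (fact assms)
  have "nabla_hat h D (X, \<alpha>) (Jhat sm h J (Y, \<beta>)) =
      (- D X Y + sm 2 (D X (J (sharp h \<beta>))), flat h (D X (sharp h \<beta>)))"
    by (simp add: nabla_hat_def Jhat_def scale_two DX.add DX.minus DX.diff)
  moreover have "Jhat sm h J (nabla_hat h D (X, \<alpha>) (Y, \<beta>)) =
      (- D X Y + sm 2 (J (D X (sharp h \<beta>))), flat h (D X (sharp h \<beta>)))"
    by (simp add: nabla_hat_def Jhat_def)
  ultimately show ?thesis
    using module_scale_two_cancel[OF module_axioms] by auto
qed

lemma gen_parallel_nabla_hat_iff:
  assumes "\<And>X. Modules.additive (D X)"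
  shows "gen_parallel sm (nabla_hat h D) (Jhat sm h J) \<longleftrightarrow> parallel11 D J"
proof
  assume par: "gen_parallel sm (nabla_hat h D) (Jhat sm h J)"
  show "parallel11 D J"
    unfolding parallel11_def
  proof (intro allI)
    fix X W
    have "(X, flat h W) \<in> gen_sections sm" "(W, flat h W) \<in> gen_sections sm"
      by (simp_all add: gen_sections_def flat_one_form)
    with par have "nabla_hat h D (X, flat h W) (Jhat sm h J (W, flat h W))
        = Jhat sm h J (nabla_hat h D (X, flat h W) (W, flat h W))"
      unfolding gen_parallel_def by blast
    then show "D X (J W) = J (D X W)"
      using nabla_hat_Jhat_commute_iff[where D = D, OF assms] by simp
  qed
next
  assume "parallel11 D J"
  then show "gen_parallel sm (nabla_hat h D) (Jhat sm h J)"
    using nabla_hat_Jhat_commute_iff[where D = D, OF assms]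
    unfolding gen_parallel_def parallel11_def gen_sections_def by auto
qed

end

lemma Jhat_gen_sections: "\<tau> \<in> gen_sections sm \<Longrightarrow> Jhat sm h J \<tau> \<in> gen_sections sm"
  unfolding gen_sections_def Jhat_def by auto

definition dual_connection :: "('v \<Rightarrow> 'r::comm_ring_1 \<Rightarrow> 'r) \<Rightarrow> ('v \<Rightarrow> 'v \<Rightarrow> 'r)
     \<Rightarrow> ('v \<Rightarrow> 'v \<Rightarrow> 'v) \<Rightarrow> 'v \<Rightarrow> 'v \<Rightarrow> 'v" where
  "dual_connection act h nabla X Y = sharp h (nabla_form act nabla X (flat h Y))"

locale connection_with_metric =
  fixes sm :: "'r::{comm_ring_1,real_algebra_1} \<Rightarrow> 'v::ab_group_add \<Rightarrow> 'v"
    and act :: "'v \<Rightarrow> 'r \<Rightarrow> 'r"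
    and nabla :: "'v \<Rightarrow> 'v \<Rightarrow> 'v"
    and h :: "'v \<Rightarrow> 'v \<Rightarrow> 'r"
  assumes vf: "vf_structure sm act"
    and conn: "affine_connection sm act nabla"
    and metric: "nondeg_sym_tensor sm h"
begin

sublocale nondegenerate_metric sm h
  using vf metric by (simp add: nondegenerate_metric_def nondegenerate_metric_axioms_def
      vf_structure_def)

lemma additive_act: "Modules.additive (act X)"
  by (rule Modules.additive.intro) (use vf in \<open>simp add: vf_structure_def\<close>)

lemma act_mult: "act X (f * g) = act X f * g + f * act X g"
  using vf unfolding vf_structure_def by blast

lemma additive_nabla: "Modules.additive (nabla X)"
  by (rule Modules.additive.intro) (use conn in \<open>simp add: affine_connection_def\<close>)

lemma nabla_scale: "nabla X (sm f Y) = sm (act X f) Y + sm f (nabla X Y)"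
  using conn unfolding affine_connection_def by blast

lemma nabla_form_one_form:
  assumes "\<eta> \<in> one_forms sm"
  shows "nabla_form act nabla X \<eta> \<in> one_forms sm"
proof -
  interpret actX: additive "act X" by (fact additive_act)
  interpret nablaX: additive "nabla X" by (fact additive_nabla)
  show ?thesis
    using assms unfolding one_forms_def nabla_form_def
    by (auto simp: nablaX.add actX.add nabla_scale act_mult algebra_simps)
qed

lemma h_dual_connection:
  "h (dual_connection act h nabla X Y) Z = act X (h Y Z) - h Y (nabla X Z)"
  by (simp add: dual_connection_def h_sharp nabla_form_one_form flat_one_form)
     (simp add: nabla_form_def flat_def)

lemma additive_dual_connection: "Modules.additive (dual_connection act h nabla X)"
proof
  fix Y W
  interpret actX: additive "act X" by (fact additive_act)
  show "dual_connection act h nabla X (Y + W) =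
      dual_connection act h nabla X Y + dual_connection act h nabla X W"
    by (rule h_eqI) (simp add: h_dual_connection Modules.additive.add[OF additive_h_left] actX.add)
qed

lemma nabla_hat_star_eq_nabla_hat_dual:
  assumes "\<tau> \<in> gen_sections sm"
  shows "nabla_hat_star act h nabla \<sigma> \<tau> = nabla_hat h (dual_connection act h nabla) \<sigma> \<tau>"
  using assms unfolding gen_sections_def
  by (auto simp: nabla_hat_star_def nabla_hat_def dual_connection_def flat_sharp nabla_form_one_form)

lemma gen_parallel_nabla_hat_star_iff:
  "gen_parallel sm (nabla_hat_star act h nabla) (Jhat sm h J)
     \<longleftrightarrow> gen_parallel sm (nabla_hat h (dual_connection act h nabla)) (Jhat sm h J)"
  unfolding gen_parallel_def by (simp add: nabla_hat_star_eq_nabla_hat_dual Jhat_gen_sections)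

lemma parallel11_dual_connection_iff:
  assumes "h_symmetric h J"
  shows "parallel11 (dual_connection act h nabla) J \<longleftrightarrow> parallel11 nabla J"
proof -
  have hJ: "h (J A) B = h A (J B)" for A B
    using assms unfolding h_symmetric_def by blast
  have adjoint: "h (dual_connection act h nabla X (J W)) Z - h (J (dual_connection act h nabla X W)) Z
      = h W (nabla X (J Z)) - h W (J (nabla X Z))" for X W Z
    by (simp add: h_dual_connection hJ)
  show ?thesis
    unfolding parallel11_def
  proof (intro iffI allI)
    fix X Z
    assume "\<forall>X W. dual_connection act h nabla X (J W) = J (dual_connection act h nabla X W)"
    then have "h W (nabla X (J Z)) = h W (J (nabla X Z))" for W
      using adjoint[of X W Z] by simp
    then show "nabla X (J Z) = J (nabla X Z)"
      by (intro h_eqI) (metis h_sym)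
  next
    fix X W
    assume "\<forall>X Z. nabla X (J Z) = J (nabla X Z)"
    then show "dual_connection act h nabla X (J W) = J (dual_connection act h nabla X W)"
      using adjoint[of X W] by (intro h_eqI) simp
  qed
qed

end

theorem proposition3p4:
  fixes sm :: "'r::{comm_ring_1,real_algebra_1} \<Rightarrow> 'v::ab_group_add \<Rightarrow> 'v"
    and act :: "'v \<Rightarrow> 'r \<Rightarrow> 'r"
    and nabla :: "'v \<Rightarrow> 'v \<Rightarrow> 'v"
    and h :: "'v \<Rightarrow> 'v \<Rightarrow> 'r"
    and J :: "'v \<Rightarrow> 'v"
  assumes "vf_structure sm act"
    and "affine_connection sm act nabla"
    and "nondeg_sym_tensor sm h"
    and "tensor11 sm J"
    and "h_symmetric h J"
  shows "(gen_parallel sm (nabla_hat h nabla) (Jhat sm h J) \<longleftrightarrow> parallel11 nabla J)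
       \<and> (parallel11 nabla J \<longleftrightarrow> gen_parallel sm (nabla_hat_star act h nabla) (Jhat sm h J))"
proof -
  interpret connection_with_metric sm act nabla h
    using assms(1-3) by unfold_locales
  show ?thesis
    using gen_parallel_nabla_hat_iff[where D = nabla, OF additive_nabla]
      gen_parallel_nabla_hat_iff[where D = "dual_connection act h nabla", OF additive_dual_connection]
      gen_parallel_nabla_hat_star_iff parallel11_dual_connection_iff[OF assms(5)]
    by blast
qed

end
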